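(* The diagonals and columns of $F$ are periodic: for every integer $a\ge 0$ and every integer $n>a$, $F_{n+2a+1,\,n+a+1}=F_{n,n-a}$ (the $a$-th subdiagonal $(F_{n,n-a})_{n>a}$ has period $2a+1$); and for every integer $a\ge 1$ and every integer $n\ge a$, $F_{n+a,a}=F_{n,a}$ (the $a$-th column $(F_{n,a})_{n\ge a}$ has period $a$).
   Context: Define maps $G,S:\mathbb Z^2\to\mathbb Z^2$ by $G(x,y)=(x+y,y)$ and $S(x,y)=(3x-2y+1,\,2x-y+1)$. Define the array $(F_{n,k})_{n,k\ge 0}$ by $F_{0,0}=1$ and, for $(n,k)\neq(0,0)$, $F_{n,k}$ is the number of finite words $w=w_1w_2\cdots w_m$ ($m\ge 0$) over the alphabet $\{G,S\}$ with $w_1\circ w_2\circ\cdots\circ w_m(1,1)=(n,k)$ (the empty word acts as the identity). Equivalently: start with all entries $0$, set $F_{0,0}=1$ and $F_{1,1}=1$, and thereafter, whenever an entry $F_{n,k}$ with $n\ge 1$ changes its value, increase $F_{n+k,k}$ and $F_{3n+1-2k,\,2n+1-k}$ by $1$. *)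

theory Defs
  imports Main
begin

datatype letter = LG | LS

fun act :: "letter \<Rightarrow> int \<times> int \<Rightarrow> int \<times> int" where
  "act LG (x, y) = (x + y, y)"
| "act LS (x, y) = (3*x - 2*y + 1, 2*x - y + 1)"

definition word_act :: "letter list \<Rightarrow> int \<times> int \<Rightarrow> int \<times> int" where
  "word_act w p = foldr act w p"

definition F :: "nat \<Rightarrow> nat \<Rightarrow> nat" where
  "F n k = (if n = 0 \<and> k = 0 then 1
            else card {w. word_act w (1, 1) = (int n, int k)})"

end

theory Submission
  imports Defs
begin

text \<open>
  Every point reached from (1,1) satisfies 1 \<le> y \<le> x. On that region both maps are
  injective, G lands in x \<ge> 2y while S lands in x < 2y, and neither hits (1,1).
  So every word reaching G p or S p must start with that letter, and stripping it off
  is a bijection onto the words reaching p; thus F (G p) = F p = F (S p).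
  Now S maps (n, n - a) to (n + 2a + 1, n + a + 1) and G maps (n, a) to (n + a, a).
\<close>

abbreviation words_to :: "int \<times> int \<Rightarrow> letter list set" where
  "words_to p \<equiv> {w. word_act w (1, 1) = p}"

lemma word_act_Nil [simp]: "word_act [] p = p"
  by (simp add: word_act_def)

lemma word_act_Cons [simp]: "word_act (c # w) p = act c (word_act w p)"
  by (simp add: word_act_def)

lemma word_act_start_reaches:
  assumes "word_act w (1, 1) = (x, y)"
  shows "1 \<le> y \<and> y \<le> x"
  using assms
proof (induction w arbitrary: x y)
  case (Cons c w)
  obtain u v where uv: "word_act w (1, 1) = (u, v)"
    by fastforce
  with Cons.IH have "1 \<le> v \<and> v \<le> u" .
  with Cons.prems uv show ?case
    by (cases c) auto
qed simp

lemma inj_act: "inj (act c)"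
  by (cases c) (auto simp: inj_def)

lemma act_LG_ne_act_LS:
  assumes "1 \<le> y" "y \<le> x" "1 \<le> v" "v \<le> u"
  shows "act LG (x, y) \<noteq> act LS (u, v)"
  using assms by auto

lemma act_ne_start:
  assumes "1 \<le> y" "y \<le> x"
  shows "act c (x, y) \<noteq> (1, 1)"
  using assms by (cases c) auto

lemma words_to_act:
  assumes "1 \<le> y" "y \<le> x"
  shows "words_to (act c (x, y)) = Cons c ` words_to (x, y)"
proof
  show "words_to (act c (x, y)) \<subseteq> Cons c ` words_to (x, y)"
  proof
    fix w assume w: "w \<in> words_to (act c (x, y))"
    then obtain d w' where w_eq: "w = d # w'"
      using act_ne_start[OF assms] by (cases w) auto
    obtain u v where uv: "word_act w' (1, 1) = (u, v)"
      by fastforce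
    have reach: "1 \<le> v" "v \<le> u"
      using word_act_start_reaches[OF uv] by auto
    have act_eq: "act d (u, v) = act c (x, y)"
      using w w_eq uv by simp
    have "d = c"
      using act_eq act_LG_ne_act_LS[OF assms reach] act_LG_ne_act_LS[OF reach assms]
      by (cases c; cases d) auto
    with act_eq have "(u, v) = (x, y)"
      using inj_act by (auto dest: injD)
    with w_eq uv \<open>d = c\<close> show "w \<in> Cons c ` words_to (x, y)"
      by auto
  qed
qed auto

lemma card_words_to_act:
  assumes "1 \<le> y" "y \<le> x"
  shows "card (words_to (act c (x, y))) = card (words_to (x, y))"
  unfolding words_to_act[OF assms] by (rule card_image) simp

lemma F_act:
  assumes "1 \<le> k" "k \<le> n" "act c (int n, int k) = (int n', int k')"
  shows "F n' k' = F n k"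
proof -
  have "n' \<noteq> 0"
    using assms by (cases c) auto
  with assms show ?thesis
    unfolding F_def using card_words_to_act[of "int k" "int n" c] by simp
qed

theorem theorem13:
  shows "(\<forall>a n::nat. a < n \<longrightarrow> F (n + 2*a + 1) (n + a + 1) = F n (n - a))
       \<and> (\<forall>a n::nat. 1 \<le> a \<and> a \<le> n \<longrightarrow> F (n + a) a = F n a)"
proof (intro conjI allI impI)
  fix a n :: nat
  assume "a < n"
  then show "F (n + 2*a + 1) (n + a + 1) = F n (n - a)"
    by (intro F_act[where c = LS]) auto
next
  fix a n :: nat
  assume "1 \<le> a \<and> a \<le> n"
  then show "F (n + a) a = F n a"
    by (intro F_act[where c = LG]) auto
qed

end
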